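(* In the model described in the context, if the threshold satisfies $t<\tau+f$ (i.e. $t$ records from distinct objects suffice to create an evidence), then the a-audit cannot satisfy strong accuracy.
   Context: Model. An asynchronous system has client processes (writers, readers, auditors) and $n$ storage objects $o_1,\dots,o_n$. Each $o_k$ is a linearisable loggable read/write register with a log $L_k$. Its rw-write($b$) stores a block; rw-read() returns the current block and appends $\langle p_r,\mathit{label}(b)\rangle$ to $L_k$, where $p_r$ is the reader and $\mathit{label}(b)$ identifies the value from which $b$ was derived; rw-getLog() returns $L_k$. A multi-writer multi-reader register over values $\mathbb{V}$ is emulated by information dispersal. An a-write($v$) encodes $v$ into $b_{v_1},\dots,b_{v_n}$ with $b_{v_k}$ sent to $o_k$. Any $\tau$ distinct blocks of $v$ suffice to recover $v$, and fewer do not; $\tau>f$. Reads are fast (one round-trip). Concurrency is unlimited, and writes may remain incomplete (reaching only some objects). Faults. At most $f$ objects are faulty; a faulty object may crash, omit its block, omit log records from auditors, and report records of nonexistent reads. Providing set $P_{p_r,v}$: the set of objects that received a write of $b_{v_k}$ and responded $b_{v_k}$ to a read of $p_r$. The value $v$ is effectively read by $p_r$ iff $|P_{p_r,v}|\ge\tau$. Audit. An a-audit collects logs from an auditing quorum of $n-f$ objects and returns a set $E_A$ of evidences. An evidence $\mathcal{E}_{p_r,v}$ is created once at least $t$ records $\langle p_r,\mathit{label}(v)\rangle$ from distinct objects are collected. Strong accuracy: for every correct reader $p_r$ and every value $v$, $|P_{p_r,v}|<\tau$ before the audit implies $\mathcal{E}_{p_r,v}\notin E_A$. *)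

theory Defs
  imports Main
begin

text \<open>Abstract snapshot of an execution of the dispersal-based register at the
  moment an a-audit completes.  Storage objects are o_0 .. o_(n-1), i.e. the
  naturals below n; 'p are client (reader) processes, 'v are register values.\<close>

record ('p, 'v) execution =
  faulty          :: "nat set"
  received        :: "nat \<Rightarrow> 'v \<Rightarrow> bool"      \<comment> \<open>o_k received the write of block b_(v,k)\<close>
  responded       :: "'p \<Rightarrow> nat \<Rightarrow> 'v \<Rightarrow> bool" \<comment> \<open>o_k responded b_(v,k) to a read of p\<close>
  log             :: "nat \<Rightarrow> ('p \<times> 'v) set"  \<comment> \<open>records of o_k reported to the auditor\<close>
  quorum          :: "nat set"
  correct_readers :: "'p set"

text \<open>Faulty objects may omit blocks, omit records and report fabricated records.\<close>

definition admissible :: "nat \<Rightarrow> nat \<Rightarrow> ('p, 'v) execution \<Rightarrow> bool" where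
  "admissible n f e \<longleftrightarrow>
     faulty e \<subseteq> {..<n} \<and> card (faulty e) \<le> f \<and>
     quorum e \<subseteq> {..<n} \<and> card (quorum e) = n - f \<and>
     (\<forall>k<n. k \<notin> faulty e \<longrightarrow>
        (\<forall>p v. responded e p k v \<longrightarrow> received e k v) \<and>
        (\<forall>p v. (p, v) \<in> log e k \<longleftrightarrow> responded e p k v))"

definition providing_set :: "nat \<Rightarrow> ('p, 'v) execution \<Rightarrow> 'p \<Rightarrow> 'v \<Rightarrow> nat set" where
  "providing_set n e p v = {k \<in> {..<n}. received e k v \<and> responded e p k v}"

text \<open>Evidences E_A returned by the a-audit with threshold t: an evidence for
  (p,v) is created once t records <p, label(v)> from distinct objects of the
  auditing quorum are collected.\<close>
definition evidences :: "nat \<Rightarrow> ('p, 'v) execution \<Rightarrow> ('p \<times> 'v) set" where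
  "evidences t e = {(p, v). t \<le> card {k \<in> quorum e. (p, v) \<in> log e k}}"

definition strong_accuracy :: "nat \<Rightarrow> nat \<Rightarrow> nat \<Rightarrow> ('p, 'v) execution \<Rightarrow> bool" where
  "strong_accuracy n \<tau> t e \<longleftrightarrow>
     (\<forall>p \<in> correct_readers e. \<forall>v.
        card (providing_set n e p v) < \<tau> \<longrightarrow> (p, v) \<notin> evidences t e)"

end

theory Submission
  imports Defs
begin

text \<open>The first m objects are faulty and fabricate a record of every read, while
  the correct objects m, ..., t-1 really serve p the block of v.  The auditor then
  collects t records from distinct objects of the quorum, although only t - m
  objects provide blocks of v.  With m = min f t this is fewer than \<tau> blocks,
  because t < \<tau> + f and f < \<tau>.\<close>

definition forged_records_execution :: "nat \<Rightarrow> nat \<Rightarrow> nat \<Rightarrow> ('p, 'v) execution" where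
  "forged_records_execution m t q =
     \<lparr> faulty = {..<m},
       received = (\<lambda>k v. m \<le> k \<and> k < t),
       responded = (\<lambda>p k v. m \<le> k \<and> k < t),
       log = (\<lambda>k. if k < t then UNIV else {}),
       quorum = {..<q},
       correct_readers = UNIV \<rparr>"

lemma admissible_forged_records_execution:
  assumes "m \<le> f" and "m \<le> n" and "q = n - f"
  shows "admissible n f (forged_records_execution m t q)"
  using assms unfolding admissible_def forged_records_execution_def by auto

lemma providing_set_forged_records_execution:
  assumes "t \<le> n"
  shows "providing_set n (forged_records_execution m t q) p v = {m..<t}"
  using assms unfolding providing_set_def forged_records_execution_def by auto

lemma evidences_forged_records_execution:
  assumes "t \<le> q"
  shows "(p, v) \<in> evidences t (forged_records_execution m t q)"
proof -
  have "{k \<in> quorum (forged_records_execution m t q). (p, v) \<in> log (forged_records_execution m t q) k}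
          = {..<t}"
    using assms unfolding forged_records_execution_def by auto
  then show ?thesis
    unfolding evidences_def by (metis (mono_tags, lifting) card_lessThan case_prod_conv mem_Collect_eq order_refl)
qed

theorem lemma4:
  fixes n f \<tau> t :: nat
  assumes "f < \<tau>" and "t < \<tau> + f" and "t \<le> n - f"
  shows "\<exists>e :: ('p, 'v) execution. admissible n f e \<and> \<not> strong_accuracy n \<tau> t e"
proof -
  define m where "m = min f t"
  define e :: "('p, 'v) execution" where "e = forged_records_execution m t (n - f)"
  obtain p :: 'p and v :: 'v where True by simp
  have "admissible n f e"
    using assms(3) unfolding e_def m_def by (intro admissible_forged_records_execution) auto
  moreover have "card (providing_set n e p v) < \<tau>"
    using assms unfolding e_def m_def
    by (subst providing_set_forged_records_execution) auto
  moreover have "(p, v) \<in> evidences t e"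
    using assms(3) unfolding e_def by (rule evidences_forged_records_execution)
  moreover have "p \<in> correct_readers e"
    unfolding e_def forged_records_execution_def by simp
  ultimately show ?thesis
    unfolding strong_accuracy_def by blast
qed

end
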